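(* Let $q\ge3$ be a prime power, $1\le d\le e$, $0\le i\le d$, $1\le j\le d$, $h_{\max}=\min\{j,d-i\}$, and $s=b_{h_{\max}}(i,j)$. Then $$\tfrac14 q^{s}<|B_j(i)|<2q^{s}.$$
   Context: For integers $m\ge 0$ and $l$, ${m\brack l}=\prod_{t=1}^{l}\frac{q^{m-t+1}-1}{q^t-1}$ for $l\ge0$ and $0$ for $l<0$. For $0\le i,j\le d$, $$B_j(i)=\sum_{h=0}^{\min\{j,d-i\}}(-1)^{j-h}q^{eh+\binom{j-h}{2}}{d-h\brack d-j}{d-i\brack h}$$ (the eigenvalues of the bilinear forms graph $H_q(d,e,j)$ on $d\times e$ matrices over $\mathbb F_q$, adjacency meaning the difference has rank $j$). Also $b_h(i,j)=h(d+e-i-h)+(d-j)(j-h)+\binom{j-h}{2}$. *)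

theory Defs
  imports Complex_Main "HOL-Computational_Algebra.Primes"
begin

text \<open>Gaussian binomial coefficient [m l]_q for m, l >= 0 (real-valued).
  The factor q^(m+1-t) - 1 vanishes at t = m+1, so it is 0 when l > m.\<close>
definition gauss_binom :: "nat \<Rightarrow> nat \<Rightarrow> nat \<Rightarrow> real" where
  "gauss_binom q m l = (\<Prod>t=1..l. (real q ^ (m + 1 - t) - 1) / (real q ^ t - 1))"

text \<open>Eigenvalue B_j(i) of the bilinear forms graph H_q(d,e,j).\<close>
definition bilin_eig :: "nat \<Rightarrow> nat \<Rightarrow> nat \<Rightarrow> nat \<Rightarrow> nat \<Rightarrow> real" where
  "bilin_eig q d e j i =
     (\<Sum>h=0..min j (d - i).
        (-1) ^ (j - h) * real q ^ (e * h + ((j - h) choose 2))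
        * gauss_binom q (d - h) (d - j) * gauss_binom q (d - i) h)"

definition b_exp :: "nat \<Rightarrow> nat \<Rightarrow> nat \<Rightarrow> nat \<Rightarrow> nat \<Rightarrow> nat" where
  "b_exp d e h i j = h * (d + e - i - h) + (d - j) * (j - h) + ((j - h) choose 2)"

end

theory Submission
  imports Defs
begin

(*
  Up to the sign (-1)^(j - H), H = min j (d - i), B_j(i) is the alternating sum
  sum_{h <= H} (-1)^(H - h) a_h of its unsigned summands a_h >= 0. For q >= 3 and d <= e
  consecutive summands satisfy a_h < (3/4) a_(h+1), and an alternating sum of increasing
  nonnegative terms lies between a_H - a_(H-1) and a_H; hence a_H / 4 < |B_j(i)| <= a_H.
  The top summand a_H is q^p times a single Gaussian binomial [m, l] with
  p + l (m - l) = b_H(i,j), and q^(l (m - l)) <= [m, l] < 2 q^(l (m - l)) because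
  [m, l] prod_{t <= l} (1 - q^-t) <= q^(l (m - l)), where the product exceeds 1/2 for q >= 3.
*)

lemma gauss_binom_0 [simp]: "gauss_binom q m 0 = 1"
  by (simp add: gauss_binom_def)

lemma gauss_binom_Suc:
  "gauss_binom q m (Suc l) = gauss_binom q m l * ((real q ^ (m - l) - 1) / (real q ^ Suc l - 1))"
  by (simp add: gauss_binom_def prod.cl_ivl_Suc)

lemma gauss_binom_nonneg: "q \<ge> 1 \<Longrightarrow> 0 \<le> gauss_binom q m l"
  unfolding gauss_binom_def
  by (intro prod_nonneg ballI divide_nonneg_nonneg) (simp_all add: one_le_power)

lemma gauss_binom_Suc_upper:
  assumes "l \<le> m"
  shows "gauss_binom q (Suc m) l * (real q ^ (Suc m - l) - 1) = gauss_binom q m l * (real q ^ Suc m - 1)"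
  using assms
proof (induction l)
  case 0
  then show ?case by simp
next
  case (Suc l)
  then have IH: "gauss_binom q (Suc m) l * (real q ^ (Suc m - l) - 1) = gauss_binom q m l * (real q ^ Suc m - 1)"
    by simp
  have "gauss_binom q (Suc m) (Suc l) * (real q ^ (Suc m - Suc l) - 1)
      = gauss_binom q (Suc m) l * (real q ^ (Suc m - l) - 1) * (real q ^ (m - l) - 1) / (real q ^ Suc l - 1)"
    by (simp add: gauss_binom_Suc)
  also have "\<dots> = gauss_binom q m (Suc l) * (real q ^ Suc m - 1)"
    by (simp add: IH gauss_binom_Suc)
  finally show ?case .
qed

lemma gauss_binom_self:
  assumes "q \<ge> 2"
  shows "gauss_binom q m m = 1"
proof (induction m)
  case 0
  then show ?case by simp
next
  case (Suc m)
  have "gauss_binom q (Suc m) m * (real q - 1) = real q ^ Suc m - 1"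
    using gauss_binom_Suc_upper[of m m q] Suc by simp
  moreover have "real q ^ Suc m > 1"
    using assms by (intro one_less_power) auto
  ultimately show ?case by (simp add: gauss_binom_Suc)
qed

lemma gauss_binom_add_Suc:
  "gauss_binom q (k + Suc l) (Suc l)
     = gauss_binom q (k + l) l * ((real q ^ (k + Suc l) - 1) / (real q ^ Suc l - 1))"
  using gauss_binom_Suc_upper[of l "k + l" q]
  by (simp add: gauss_binom_Suc Suc_diff_le)

definition euler_prod :: "nat \<Rightarrow> nat \<Rightarrow> real" where
  "euler_prod q l = (\<Prod>a=1..l. 1 - 1 / real q ^ a)"

lemma euler_prod_Suc: "euler_prod q (Suc l) = euler_prod q l * (1 - 1 / real q ^ Suc l)"
  by (simp add: euler_prod_def prod.cl_ivl_Suc)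

lemma euler_prod_ge:
  assumes "q \<ge> 3"
  shows "1/2 + 1 / (2 * real q ^ l) \<le> euler_prod q l"
proof (induction l)
  case 0
  then show ?case by (simp add: euler_prod_def)
next
  case (Suc l)
  \<comment> \<open>The term 1 / (2 q^l), not needed for the final bound 1/2, makes the induction go through.\<close>
  define x where "x = 1 / real q ^ l"
  have q: "real q \<ge> 3" using assms by simp
  have x: "0 \<le> x" "x \<le> 1" using assms by (auto simp: x_def)
  have "1/2 + x / (2 * real q) \<le> (1/2 + x/2) * (1 - x / real q)"
  proof -
    have "0 \<le> 2 * real q * (x * (real q - 2 - x))" using x q by simp
    then show ?thesis using q by (simp add: field_simps)
  qed
  also have "\<dots> \<le> euler_prod q l * (1 - x / real q)"
  proof (rule mult_right_mono)
    show "1/2 + x/2 \<le> euler_prod q l" using Suc by (simp add: x_def)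
    show "0 \<le> 1 - x / real q" using x q by simp
  qed
  finally show ?case by (simp add: euler_prod_Suc x_def mult_ac)
qed

lemma gauss_binom_add_ge:
  assumes "q \<ge> 2"
  shows "real q ^ (k * l) \<le> gauss_binom q (k + l) l"
proof (induction l)
  case 0
  then show ?case by simp
next
  case (Suc l)
  have B: "real q ^ Suc l > 1" using assms by (intro one_less_power) auto
  have "real q ^ k * (real q ^ Suc l - 1) \<le> real q ^ (k + Suc l) - 1"
    using assms by (simp add: power_add algebra_simps one_le_power)
  then have "real q ^ k \<le> (real q ^ (k + Suc l) - 1) / (real q ^ Suc l - 1)"
    using B by (simp add: field_simps)
  then have "real q ^ (k * l) * real q ^ k
      \<le> gauss_binom q (k + l) l * ((real q ^ (k + Suc l) - 1) / (real q ^ Suc l - 1))"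
    using Suc gauss_binom_nonneg[of q] assms by (intro mult_mono) auto
  then show ?case by (subst gauss_binom_add_Suc) (simp add: power_add mult.commute)
qed

lemma gauss_binom_add_mult_euler_prod_le:
  assumes "q \<ge> 2"
  shows "gauss_binom q (k + l) l * euler_prod q l \<le> real q ^ (k * l)"
proof (induction l)
  case 0
  then show ?case by (simp add: euler_prod_def)
next
  case (Suc l)
  have B: "real q ^ Suc l > 1" using assms by (intro one_less_power) auto
  have "(real q ^ (k + Suc l) - 1) / (real q ^ Suc l - 1) * (1 - 1 / real q ^ Suc l)
      = (real q ^ (k + Suc l) - 1) / real q ^ Suc l"
    using B assms by (simp add: divide_simps)
  then have "gauss_binom q (k + Suc l) (Suc l) * euler_prod q (Suc l)
      = gauss_binom q (k + l) l * euler_prod q l * ((real q ^ (k + Suc l) - 1) / real q ^ Suc l)"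
    by (simp only: gauss_binom_add_Suc euler_prod_Suc ac_simps)
  also have "\<dots> \<le> real q ^ (k * l) * real q ^ k"
  proof (rule mult_mono[OF Suc])
    show "(real q ^ (k + Suc l) - 1) / real q ^ Suc l \<le> real q ^ k"
      using B by (simp add: power_add field_simps)
    have "1 \<le> real q ^ (k + Suc l)" using assms by (intro one_le_power) auto
    then show "0 \<le> (real q ^ (k + Suc l) - 1) / real q ^ Suc l" by simp
  qed simp
  finally show ?case by (simp add: power_add mult.commute)
qed

lemma gauss_binom_ge_power:
  assumes "q \<ge> 2" "l \<le> m"
  shows "real q ^ (l * (m - l)) \<le> gauss_binom q m l"
  using gauss_binom_add_ge[OF assms(1), of "m - l" l] assms(2) by (simp add: mult.commute)

lemma gauss_binom_pos:
  assumes "q \<ge> 2" "l \<le> m"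
  shows "0 < gauss_binom q m l"
proof -
  have "0 < real q ^ (l * (m - l))" using assms by simp
  then show ?thesis using gauss_binom_ge_power[OF assms] by linarith
qed

lemma gauss_binom_less_power:
  assumes "q \<ge> 3" "l \<le> m"
  shows "gauss_binom q m l < 2 * real q ^ (l * (m - l))"
proof -
  have "0 < 1 / (2 * real q ^ l)" using assms by simp
  then have "1/2 < euler_prod q l" using euler_prod_ge[OF assms(1), of l] by linarith
  then have "gauss_binom q m l * (1/2) < gauss_binom q m l * euler_prod q l"
    using gauss_binom_pos[of q l m] assms by (intro mult_strict_left_mono) auto
  also have "\<dots> \<le> real q ^ (l * (m - l))"
    using gauss_binom_add_mult_euler_prod_le[of q "m - l" l] assms by (simp add: mult.commute)
  finally show ?thesis by simp
qed

definition alternating_sum :: "(nat \<Rightarrow> 'a::comm_ring_1) \<Rightarrow> nat \<Rightarrow> 'a" where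
  "alternating_sum a n = (\<Sum>h=0..n. (-1) ^ (n - h) * a h)"

lemma alternating_sum_0 [simp]: "alternating_sum a 0 = a 0"
  by (simp add: alternating_sum_def)

lemma alternating_sum_Suc: "alternating_sum a (Suc n) = a (Suc n) - alternating_sum a n"
proof -
  have "(\<Sum>h=0..n. (-1) ^ (Suc n - h) * a h) = - alternating_sum a n"
    by (simp add: alternating_sum_def sum_negf[symmetric] Suc_diff_le)
  then show ?thesis by (simp add: alternating_sum_def sum.atLeast0_atMost_Suc)
qed

lemma alternating_sum_bounds:
  fixes a :: "nat \<Rightarrow> 'a::linordered_idom"
  assumes "0 \<le> a 0" "\<And>h. h < n \<Longrightarrow> a h \<le> a (Suc h)"
  shows "0 \<le> alternating_sum a n \<and> alternating_sum a n \<le> a n"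
  using assms(2)
proof (induction n)
  case 0
  then show ?case using assms(1) by simp
next
  case (Suc n)
  then show ?case by (force simp: alternating_sum_Suc)
qed

lemma alternating_sum_ratio_bounds:
  fixes a :: "nat \<Rightarrow> 'a::linordered_field"
  assumes nonneg: "\<And>h. h \<le> n \<Longrightarrow> 0 \<le> a h"
    and ratio: "\<And>h. h < n \<Longrightarrow> a h < c * a (Suc h)"
    and c: "0 < c" "c \<le> 1" and pos: "0 < a n"
  shows "(1 - c) * a n < alternating_sum a n \<and> alternating_sum a n \<le> a n"
proof -
  have mono: "a h \<le> a (Suc h)" if "h < n" for h
  proof -
    have "c * a (Suc h) \<le> a (Suc h)"
      using c nonneg[of "Suc h"] that by (simp add: mult_left_le_one_le)
    then show ?thesis using ratio[OF that] by simp
  qed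
  have "(1 - c) * a n < alternating_sum a n"
  proof (cases n)
    case 0
    then show ?thesis using c pos by simp
  next
    case (Suc m)
    have "a m \<ge> alternating_sum a m"
      using alternating_sum_bounds[of a m] nonneg mono Suc by auto
    then show ?thesis
      using ratio[of m] Suc by (simp add: alternating_sum_Suc algebra_simps)
  qed
  then show ?thesis
    using alternating_sum_bounds[of a n] nonneg mono by auto
qed

text \<open>This is the ratio bound between consecutive summands of B_j(i) with denominators cleared:
  t, v, w, z, E stand for q^(j-h-1), q^(d-i-h), q^(d-h), q^(h+1), q^e (cf. bilin_term_Suc_eq).\<close>

lemma three_quarters_ineq:
  fixes Q t v w z E :: real
  assumes "Q \<ge> 3" "t \<ge> 1" "v \<ge> Q" "w > 1" "z > 1" "w * z \<le> E * v"
  shows "t * (w - 1) * (z - 1) < 3/4 * (E * (t * Q - 1) * (v - 1))"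
proof -
  have "t * 3 \<le> t * Q" using assms by (intro mult_left_mono) auto
  then have t2: "2 * t \<le> t * Q - 1" using assms by linarith
  have v2: "2 * v \<le> 3 * (v - 1)" using assms by (simp add: algebra_simps)
  have "2 * t * (2 * v) \<le> (t * Q - 1) * (3 * (v - 1))"
    using assms t2 by (intro mult_mono[OF t2 v2]) auto
  then have tv: "4 * t * v \<le> 3 * (t * Q - 1) * (v - 1)" by (simp add: algebra_simps)
  have "0 < E * v"
    using assms mult_pos_pos[of w z] by linarith
  then have E: "0 \<le> E"
    using assms by (simp add: zero_less_mult_iff)
  have "(w - 1) * (z - 1) < w * z"
    using assms by (simp add: algebra_simps)
  then have "t * (w - 1) * (z - 1) < t * (w * z)"
    using assms by simp
  also have "\<dots> \<le> t * (E * v)"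
    using assms by simp
  also have "\<dots> \<le> 3/4 * (E * (t * Q - 1) * (v - 1))"
    using mult_left_mono[OF tv E] by (simp add: algebra_simps)
  finally show ?thesis .
qed

definition bilin_term :: "nat \<Rightarrow> nat \<Rightarrow> nat \<Rightarrow> nat \<Rightarrow> nat \<Rightarrow> nat \<Rightarrow> real" where
  "bilin_term q d e j i h =
     real q ^ (e * h + ((j - h) choose 2)) * gauss_binom q (d - h) (d - j) * gauss_binom q (d - i) h"

lemma bilin_eig_eq_alternating_sum:
  "bilin_eig q d e j i
     = (-1) ^ (j - min j (d - i)) * alternating_sum (bilin_term q d e j i) (min j (d - i))"
proof -
  let ?H = "min j (d - i)"
  have "bilin_eig q d e j i = (\<Sum>h=0..?H. (-1) ^ (j - ?H) * ((-1) ^ (?H - h) * bilin_term q d e j i h))"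
    unfolding bilin_eig_def
  proof (intro sum.cong refl)
    fix h
    assume "h \<in> {0..?H}"
    then have "(-1::real) ^ (j - h) = (-1) ^ (j - ?H) * (-1) ^ (?H - h)"
      by (simp add: power_add[symmetric])
    then show "(-1) ^ (j - h) * real q ^ (e * h + ((j - h) choose 2))
        * gauss_binom q (d - h) (d - j) * gauss_binom q (d - i) h
      = (-1) ^ (j - ?H) * ((-1) ^ (?H - h) * bilin_term q d e j i h)"
      by (simp add: bilin_term_def mult.assoc)
  qed
  then show ?thesis by (simp add: alternating_sum_def sum_distrib_left)
qed

lemma bilin_term_nonneg: "q \<ge> 1 \<Longrightarrow> 0 \<le> bilin_term q d e j i h"
  by (simp add: bilin_term_def gauss_binom_nonneg)

lemma bilin_term_pos:
  assumes "q \<ge> 2" "j \<le> d" "h \<le> min j (d - i)"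
  shows "0 < bilin_term q d e j i h"
  unfolding bilin_term_def using assms
  by (intro mult_pos_pos gauss_binom_pos zero_less_power) auto

lemma bilin_term_Suc_eq:
  assumes "q \<ge> 2" "Suc h \<le> j" "j \<le> d" "i + Suc h \<le> d"
  shows "bilin_term q d e j i h * (real q ^ e * (real q ^ (j - h) - 1) * (real q ^ (d - i - h) - 1))
       = bilin_term q d e j i (Suc h) * (real q ^ (j - Suc h) * (real q ^ (d - h) - 1) * (real q ^ Suc h - 1))"
proof -
  have A: "gauss_binom q (d - h) (d - j) * (real q ^ (j - h) - 1)
         = gauss_binom q (d - Suc h) (d - j) * (real q ^ (d - h) - 1)"
  proof -
    have "Suc (d - Suc h) = d - h" "Suc (d - Suc h) - (d - j) = j - h"
      using assms by auto
    then show ?thesis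
      using gauss_binom_Suc_upper[of "d - j" "d - Suc h" q] assms by simp
  qed
  have "real q ^ Suc h > 1" using assms by (intro one_less_power) auto
  then have B: "gauss_binom q (d - i) h * (real q ^ (d - i - h) - 1)
              = gauss_binom q (d - i) (Suc h) * (real q ^ Suc h - 1)"
    by (simp add: gauss_binom_Suc diff_diff_left)
  have "j - h = Suc (j - Suc h)" using assms by simp
  then have "e * h + ((j - h) choose 2) + e = e * Suc h + ((j - Suc h) choose 2) + (j - Suc h)"
    by (simp add: numeral_2_eq_2)
  then have C: "real q ^ (e * h + ((j - h) choose 2)) * real q ^ e
              = real q ^ (e * Suc h + ((j - Suc h) choose 2)) * real q ^ (j - Suc h)"
    by (simp only: power_add[symmetric])
  have "bilin_term q d e j i h * (real q ^ e * (real q ^ (j - h) - 1) * (real q ^ (d - i - h) - 1))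
      = (real q ^ (e * h + ((j - h) choose 2)) * real q ^ e)
        * (gauss_binom q (d - h) (d - j) * (real q ^ (j - h) - 1))
        * (gauss_binom q (d - i) h * (real q ^ (d - i - h) - 1))"
    unfolding bilin_term_def by (simp only: mult_ac)
  also have "\<dots> = (real q ^ (e * Suc h + ((j - Suc h) choose 2)) * real q ^ (j - Suc h))
        * (gauss_binom q (d - Suc h) (d - j) * (real q ^ (d - h) - 1))
        * (gauss_binom q (d - i) (Suc h) * (real q ^ Suc h - 1))"
    unfolding A B C ..
  also have "\<dots> = bilin_term q d e j i (Suc h)
        * (real q ^ (j - Suc h) * (real q ^ (d - h) - 1) * (real q ^ Suc h - 1))"
    unfolding bilin_term_def by (simp only: mult_ac)
  finally show ?thesis .
qed

lemma bilin_term_less: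
  assumes "q \<ge> 3" "d \<le> e" "j \<le> d" "h < min j (d - i)"
  shows "bilin_term q d e j i h < 3/4 * bilin_term q d e j i (Suc h)"
proof -
  define Q t v w z E where "Q = real q" and "t = Q ^ (j - Suc h)" and "v = Q ^ (d - i - h)"
    and "w = Q ^ (d - h)" and "z = Q ^ Suc h" and "E = Q ^ e"
  have Q: "Q \<ge> 3" using assms by (simp add: Q_def)
  have hj: "Suc h \<le> j" and hd: "i + Suc h \<le> d" using assms by auto
  have "j - h = Suc (j - Suc h)" using hj by simp
  then have tQ: "t * Q = Q ^ (j - h)" by (simp add: t_def mult.commute)
  have "w * z = Q ^ (d - h + Suc h)" by (simp add: w_def z_def power_add)
  also have "\<dots> \<le> Q ^ (e + (d - i - h))" using Q hd assms by (intro power_increasing) auto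
  finally have wz: "w * z \<le> E * v" by (simp add: E_def v_def power_add)
  have t: "1 \<le> t" using Q by (simp add: t_def one_le_power)
  have v: "Q \<le> v" using Q hd power_increasing[of 1 "d - i - h" Q] by (simp add: v_def)
  have w: "1 < w" unfolding w_def using Q hd by (intro one_less_power) auto
  have z: "1 < z" unfolding z_def using Q by (intro one_less_power) auto
  have less: "t * (w - 1) * (z - 1) < 3/4 * (E * (t * Q - 1) * (v - 1))"
    by (rule three_quarters_ineq[OF Q t v w z wz])
  have "Q \<le> t * Q" using mult_right_mono[OF t, of Q] Q by simp
  then have denom_pos: "0 < E * (t * Q - 1) * (v - 1)"
    using Q v unfolding E_def by (intro mult_pos_pos zero_less_power) linarith+
  have "bilin_term q d e j i h * (E * (t * Q - 1) * (v - 1))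
      = bilin_term q d e j i (Suc h) * (t * (w - 1) * (z - 1))"
    unfolding tQ unfolding t_def v_def w_def z_def E_def Q_def
    by (rule bilin_term_Suc_eq) (use assms hj hd in auto)
  also have "\<dots> < bilin_term q d e j i (Suc h) * (3/4 * (E * (t * Q - 1) * (v - 1)))"
    using assms by (intro mult_strict_left_mono less bilin_term_pos) auto
  finally have "bilin_term q d e j i h * (E * (t * Q - 1) * (v - 1))
      < 3/4 * bilin_term q d e j i (Suc h) * (E * (t * Q - 1) * (v - 1))"
    by (simp only: mult_ac)
  then show ?thesis
    using denom_pos by (rule mult_right_less_imp_less[OF _ less_imp_le])
qed

lemma bilin_term_top_bounds:
  assumes "q \<ge> 3" "i \<le> d" "j \<le> d"
  shows "real q ^ b_exp d e (min j (d - i)) i j \<le> bilin_term q d e j i (min j (d - i))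
       \<and> bilin_term q d e j i (min j (d - i)) < 2 * real q ^ b_exp d e (min j (d - i)) i j"
proof -
  have q: "q \<ge> 2" using assms by simp
  obtain p m l where
    eq: "bilin_term q d e j i (min j (d - i)) = real q ^ p * gauss_binom q m l"
    and exp: "b_exp d e (min j (d - i)) i j = p + l * (m - l)" and lm: "l \<le> m"
  proof (cases "j \<le> d - i")
    case True
    define r where "r = d - i - j"
    have r: "d = i + j + r" using True assms by (simp add: r_def)
    show ?thesis
    proof (rule that[of "e * j" "d - i" j])
      show "bilin_term q d e j i (min j (d - i)) = real q ^ (e * j) * gauss_binom q (d - i) j"
        using True gauss_binom_self[OF q] by (simp add: bilin_term_def binomial_eq_0)
      show "b_exp d e (min j (d - i)) i j = e * j + j * (d - i - j)"
        using True unfolding b_exp_def r by (simp add: algebra_simps)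
    qed (use True in simp)
  next
    case False
    define a c r where "a = d - i" and "c = j - (d - i)" and "r = d - j"
    have acr: "d - i = a" "j = a + c" "i = c + r" "d = a + c + r"
      using False assms by (auto simp: a_def c_def r_def)
    show ?thesis
    proof (rule that[of "e * a + (c choose 2)" i "d - j"])
      show "bilin_term q d e j i (min j (d - i)) = real q ^ (e * a + (c choose 2)) * gauss_binom q i (d - j)"
        using False gauss_binom_self[OF q] acr by (simp add: bilin_term_def)
      show "b_exp d e (min j (d - i)) i j = e * a + (c choose 2) + (d - j) * (i - (d - j))"
        using False unfolding b_exp_def acr by (simp add: algebra_simps)
    qed (use acr in simp)
  qed
  have "real q ^ (l * (m - l)) \<le> gauss_binom q m l" "gauss_binom q m l < 2 * real q ^ (l * (m - l))"
    using gauss_binom_ge_power[OF q lm] gauss_binom_less_power[OF assms(1) lm] .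
  then show ?thesis
    unfolding eq exp power_add using assms by (simp add: mult_left_mono mult.left_commute)
qed

theorem lemma4p2:
  fixes q d e i j :: nat
  assumes "\<exists>p k. prime p \<and> k \<ge> 1 \<and> q = p ^ k"
    and "q \<ge> 3"
    and "1 \<le> d" and "d \<le> e"
    and "i \<le> d"
    and "1 \<le> j" and "j \<le> d"
  shows "(1/4) * real q ^ b_exp d e (min j (d - i)) i j < \<bar>bilin_eig q d e j i\<bar>
       \<and> \<bar>bilin_eig q d e j i\<bar> < 2 * real q ^ b_exp d e (min j (d - i)) i j"
proof -
  let ?H = "min j (d - i)" and ?a = "bilin_term q d e j i"
  have "(1 - 3/4) * ?a ?H < alternating_sum ?a ?H \<and> alternating_sum ?a ?H \<le> ?a ?H"
  proof (rule alternating_sum_ratio_bounds)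
    show "0 \<le> ?a h" for h using assms(2) by (simp add: bilin_term_nonneg)
    show "?a h < 3/4 * ?a (Suc h)" if "h < ?H" for h
      using bilin_term_less[OF assms(2,4,7) that] .
    show "0 < ?a ?H" using assms(2,7) by (intro bilin_term_pos) auto
  qed simp_all
  moreover have "\<bar>bilin_eig q d e j i\<bar> = \<bar>alternating_sum ?a ?H\<bar>"
    by (simp add: bilin_eig_eq_alternating_sum abs_mult)
  moreover note bilin_term_top_bounds[OF assms(2,5,7), of e]
  ultimately show ?thesis by auto
qed

end
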